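(* Let $n\ge1$, $\sigma\in\mathcal{S}_n$, $\epsilon\in\mathbb{R}$, and let $F_1,\dots,F_{n+1}$ be real numbers. Assign to each index $i\in\{1,\dots,n+1\}$ a label in $\{Q,P\}$: index $1$ has label $Q$, index $n+1$ has label $P$, and for $1<i\le n$ index $i$ has label $Q$ if $\sigma(i)>\sigma(i-1)$ and $P$ otherwise. For $k=1,\dots,n$ define $X_\sigma(k)=k\epsilon+\imath\big(F_{\sigma^{-1}(n)}+\dots+F_{\sigma^{-1}(n-k+1)}-F_{\sigma^{-1}(n)+1}-\dots-F_{\sigma^{-1}(n-k+1)+1}\big)$. Then for every $k\in\{1,\dots,n\}$, every index in $S^<_\sigma(n-k+1)$ has label $Q$, every index in $S^>_\sigma(n-k+1)$ has label $P$, and $X_\sigma(k)=k\epsilon+\imath\sum_{j\in S^<_\sigma(n-k+1)}F_j-\imath\sum_{j\in S^>_\sigma(n-k+1)}F_j$.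
   Context: Let $\bar\sigma=(\bar\sigma(1),\dots,\bar\sigma(n+2))=(0,\sigma(1),\dots,\sigma(n),0)$. For $m\in\{1,\dots,n\}$, $S^<_\sigma(m)=\{i:1\le i\le n+1,\ \bar\sigma(i)<m\le\bar\sigma(i+1)\}$ and $S^>_\sigma(m)=\{i:1\le i\le n+1,\ \bar\sigma(i)\ge m>\bar\sigma(i+1)\}$. *)

theory Defs
  imports Complex_Main "HOL-Combinatorics.Permutations"
begin

definition sigbar :: "nat \<Rightarrow> (nat \<Rightarrow> nat) \<Rightarrow> nat \<Rightarrow> nat" where
  "sigbar n \<sigma> i = (if i = 1 \<or> i = n + 2 then 0 else \<sigma> (i - 1))"

definition Slt :: "nat \<Rightarrow> (nat \<Rightarrow> nat) \<Rightarrow> nat \<Rightarrow> nat set" where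
  "Slt n \<sigma> m = {i. 1 \<le> i \<and> i \<le> n + 1 \<and> sigbar n \<sigma> i < m \<and> m \<le> sigbar n \<sigma> (i + 1)}"

definition Sgt :: "nat \<Rightarrow> (nat \<Rightarrow> nat) \<Rightarrow> nat \<Rightarrow> nat set" where
  "Sgt n \<sigma> m = {i. 1 \<le> i \<and> i \<le> n + 1 \<and> m \<le> sigbar n \<sigma> i \<and> sigbar n \<sigma> (i + 1) < m}"

datatype label = Q | P

definition lab :: "nat \<Rightarrow> (nat \<Rightarrow> nat) \<Rightarrow> nat \<Rightarrow> label" where
  "lab n \<sigma> i = (if i = 1 then Q else if i = n + 1 then P
                  else if \<sigma> i > \<sigma> (i - 1) then Q else P)"

definition Xsig :: "nat \<Rightarrow> (nat \<Rightarrow> nat) \<Rightarrow> real \<Rightarrow> (nat \<Rightarrow> real) \<Rightarrow> nat \<Rightarrow> complex" where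
  "Xsig n \<sigma> \<epsilon> F k = complex_of_real (real k * \<epsilon>) + \<i> * complex_of_real
      ((\<Sum>l\<in>{n - k + 1..n}. F (inv \<sigma> l)) - (\<Sum>l\<in>{n - k + 1..n}. F (inv \<sigma> l + 1)))"

end

theory Submission
  imports Defs
begin

text \<open>Let \<open>A\<close> be the set of positions \<open>j\<close> with \<open>\<sigma> j \<ge> m\<close>. As \<open>sigbar (i + 1) = \<sigma> i\<close> and
  \<open>m \<ge> 1\<close> excludes the zero endpoints, \<open>m \<le> sigbar (i + 1)\<close> means \<open>i \<in> A\<close> and
  \<open>m \<le> sigbar i\<close> means \<open>i \<in> Suc ` A\<close>; hence \<open>S\<^sup><(m) = A - Suc ` A\<close> and
  \<open>S\<^sup>>(m) = Suc ` A - A\<close>. Reindexing by \<open>\<sigma>\<close>, the two sums in \<open>X\<^sub>\<sigma>(k)\<close> are the sums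
  of \<open>F\<close> over \<open>A\<close> and over \<open>Suc ` A\<close> for \<open>m = n - k + 1\<close>, and their common part
  \<open>A \<inter> Suc ` A\<close> cancels. The labels are read off the ascent or descent at \<open>i\<close>.\<close>

definition positions_ge :: "nat \<Rightarrow> (nat \<Rightarrow> nat) \<Rightarrow> nat \<Rightarrow> nat set" where
  "positions_ge n \<sigma> m = {j \<in> {1..n}. m \<le> \<sigma> j}"

lemma sum_diff_sum_eq:
  fixes f :: "'a \<Rightarrow> 'b :: ab_group_add"
  assumes "finite A" and "finite B"
  shows "sum f A - sum f B = sum f (A - B) - sum f (B - A)"
proof -
  have "sum f A = sum f (A - B) + sum f (A \<inter> B)"
    using sum.Int_Diff[OF assms(1), of f B] by simp
  moreover have "sum f B = sum f (B - A) + sum f (A \<inter> B)"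
    using sum.Int_Diff[OF assms(2), of f A] by (simp add: Int_commute)
  ultimately show ?thesis by simp
qed

lemma lab_eq_Q_if_in_Slt:
  assumes "1 \<le> m" and "i \<in> Slt n \<sigma> m"
  shows "lab n \<sigma> i = Q"
  using assms by (auto simp: Slt_def lab_def sigbar_def split: if_splits)

lemma lab_eq_P_if_in_Sgt:
  assumes "1 \<le> m" and "i \<in> Sgt n \<sigma> m"
  shows "lab n \<sigma> i = P"
  using assms by (auto simp: Sgt_def lab_def sigbar_def split: if_splits)

lemma Slt_eq_positions_ge_diff:
  assumes "1 \<le> m"
  shows "Slt n \<sigma> m = positions_ge n \<sigma> m - Suc ` positions_ge n \<sigma> m"
proof (rule set_eqI)
  fix i
  show "i \<in> Slt n \<sigma> m \<longleftrightarrow> i \<in> positions_ge n \<sigma> m - Suc ` positions_ge n \<sigma> m"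
    using assms by (cases i) (auto simp: Slt_def positions_ge_def sigbar_def)
qed

lemma Sgt_eq_Suc_positions_ge_diff:
  assumes "1 \<le> m"
  shows "Sgt n \<sigma> m = Suc ` positions_ge n \<sigma> m - positions_ge n \<sigma> m"
proof (rule set_eqI)
  fix i
  show "i \<in> Sgt n \<sigma> m \<longleftrightarrow> i \<in> Suc ` positions_ge n \<sigma> m - positions_ge n \<sigma> m"
    using assms by (cases i) (auto simp: Sgt_def positions_ge_def sigbar_def)
qed

lemma sum_atLeastAtMost_inv_permutes:
  assumes perm: "\<sigma> permutes {1..n}" and "1 \<le> m"
  shows "(\<Sum>l\<in>{m..n}. g (inv \<sigma> l)) = (\<Sum>j\<in>positions_ge n \<sigma> m. g j)"
proof (rule sum.reindex_cong)
  show "inj_on \<sigma> (positions_ge n \<sigma> m)"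
    using perm permutes_inj inj_on_subset by blast
  show "{m..n} = \<sigma> ` positions_ge n \<sigma> m"
  proof (rule set_eqI)
    fix l
    have "l \<in> \<sigma> ` positions_ge n \<sigma> m \<longleftrightarrow> inv \<sigma> l \<in> positions_ge n \<sigma> m"
      using permutes_inverses[OF perm] by (metis image_eqI image_iff)
    also have "\<dots> \<longleftrightarrow> l \<in> {m..n}"
      using assms permutes_in_image[OF permutes_inv[OF perm], of l]
      by (auto simp: positions_ge_def permutes_inverses(1)[OF perm])
    finally show "l \<in> {m..n} \<longleftrightarrow> l \<in> \<sigma> ` positions_ge n \<sigma> m" by simp
  qed
qed (simp add: permutes_inverses(2)[OF perm])

lemma sum_inv_permutes_diff_eq_Slt_Sgt:
  fixes F :: "nat \<Rightarrow> 'a :: ab_group_add"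
  assumes "\<sigma> permutes {1..n}" and "1 \<le> m"
  shows "(\<Sum>l\<in>{m..n}. F (inv \<sigma> l)) - (\<Sum>l\<in>{m..n}. F (inv \<sigma> l + 1))
       = (\<Sum>j\<in>Slt n \<sigma> m. F j) - (\<Sum>j\<in>Sgt n \<sigma> m. F j)"
proof -
  let ?A = "positions_ge n \<sigma> m"
  have fin: "finite ?A" "finite (Suc ` ?A)"
    by (simp_all add: positions_ge_def)
  have "(\<Sum>l\<in>{m..n}. F (inv \<sigma> l + 1)) = (\<Sum>j\<in>?A. F (Suc j))"
    using sum_atLeastAtMost_inv_permutes[OF assms, of "\<lambda>j. F (j + 1)"] by simp
  also have "\<dots> = (\<Sum>j\<in>Suc ` ?A. F j)"
    by (simp add: sum.reindex)
  finally show ?thesis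
    using sum_atLeastAtMost_inv_permutes[OF assms, of F] sum_diff_sum_eq[OF fin, of F]
    by (simp add: Slt_eq_positions_ge_diff[OF assms(2)] Sgt_eq_Suc_positions_ge_diff[OF assms(2)])
qed

theorem lemma4:
  fixes n :: nat and \<sigma> :: "nat \<Rightarrow> nat" and \<epsilon> :: real and F :: "nat \<Rightarrow> real"
  assumes "n \<ge> 1" and "\<sigma> permutes {1..n}"
  shows "\<forall>k\<in>{1..n}.
     (\<forall>i\<in>Slt n \<sigma> (n - k + 1). lab n \<sigma> i = Q) \<and>
     (\<forall>i\<in>Sgt n \<sigma> (n - k + 1). lab n \<sigma> i = P) \<and>
     Xsig n \<sigma> \<epsilon> F k = complex_of_real (real k * \<epsilon>)
        + \<i> * complex_of_real (\<Sum>j\<in>Slt n \<sigma> (n - k + 1). F j)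
        - \<i> * complex_of_real (\<Sum>j\<in>Sgt n \<sigma> (n - k + 1). F j)"
proof
  fix k
  have m: "1 \<le> n - k + 1" by simp
  have "Xsig n \<sigma> \<epsilon> F k = complex_of_real (real k * \<epsilon>) + \<i> * complex_of_real
          ((\<Sum>j\<in>Slt n \<sigma> (n - k + 1). F j) - (\<Sum>j\<in>Sgt n \<sigma> (n - k + 1). F j))"
    unfolding Xsig_def sum_inv_permutes_diff_eq_Slt_Sgt[OF assms(2) m] ..
  then show "(\<forall>i\<in>Slt n \<sigma> (n - k + 1). lab n \<sigma> i = Q) \<and>
     (\<forall>i\<in>Sgt n \<sigma> (n - k + 1). lab n \<sigma> i = P) \<and>
     Xsig n \<sigma> \<epsilon> F k = complex_of_real (real k * \<epsilon>)
        + \<i> * complex_of_real (\<Sum>j\<in>Slt n \<sigma> (n - k + 1). F j)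
        - \<i> * complex_of_real (\<Sum>j\<in>Sgt n \<sigma> (n - k + 1). F j)"
    using lab_eq_Q_if_in_Slt[OF m] lab_eq_P_if_in_Sgt[OF m]
    by (simp add: right_diff_distrib)
qed

end
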